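(* Let $\alpha,\beta,\gamma>0$ with $\gamma^2-\alpha\beta>0$ and $n\ge2$. Then $Z_n^{\mathcal{GS}}=Z_n$, where $Z_n$ is the partition function of the six-vertex model on $\mathbb{T}_n$ with weights $a_1=1$, $a_2=\gamma^2-\alpha\beta$, $b_1=\beta$, $b_2=\alpha$, $c_1=c_2=\gamma$. In particular $Z_n^{\mathcal{GS}}>0$.
   Context: Six-vertex model on $\mathbb{T}_n=(\mathbb{Z}/n\mathbb{Z})^2$: orientations of edges with two in and two out at each vertex; vertex types (weights): type 1 ($a_1$): horizontal right, vertical up; type 2 ($a_2$): horizontal left, vertical down; type 3 ($b_1$): horizontal right, vertical down; type 4 ($b_2$): horizontal left, vertical up; type 5 ($c_1$): horizontal in, vertical out; type 6 ($c_2$): horizontal out, vertical in. $Z_n=\sum_\sigma\prod_v(\text{weight of type at }v)$. Snakes: $e^1=(1,0)$, $e^2=(0,1)$, $e^3=\frac12(e^1+e^2)$; mid-edges $\mathbb{M}_n$ = black $\{v+\frac12e^1\}$ ⊔ white $\{v+\frac12e^2\}$, $v\in\mathbb{T}_n$, mod $n$. A generalised snake configuration is a permutation $\bar\rho$ of $\mathbb{M}_n$ with $\bar\rho(x)\in\{x,x+e^3,x+e^1\}$ ($x$ black), $\bar\rho(x)\in\{x,x+e^3,x+e^2\}$ ($x$ white); $\mathcal{GS}_n$ their set. $S(\bar\rho)$ = number of vertices $v$ with $\bar\rho(v-\frac12e^1)=v+\frac12e^1$ and $\bar\rho(v-\frac12e^2)=v+\frac12e^2$; $A,B,C$ = numbers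 of $x$ with $\bar\rho(x)=x+e^1$, $x+e^2$, $x+e^3$ respectively. $Z_n^{\mathcal{GS}}=\sum_{\bar\rho\in\mathcal{GS}_n}(-1)^{S(\bar\rho)}\alpha^{A(\bar\rho)}\beta^{B(\bar\rho)}\gamma^{C(\bar\rho)}$. *)

theory Defs
  imports Complex_Main "HOL-Library.FuncSet" "HOL-Combinatorics.Permutations"
begin

text \<open>Vertices are pairs (i,j) with 0 <= i,j < n; arithmetic is mod n.
  The horizontal edge at v=(i,j) joins v to v+e1, the vertical edge at v joins v to v+e2.\<close>

definition grid :: "nat \<Rightarrow> (nat \<times> nat) set" where
  "grid n = {0..<n} \<times> {0..<n}"

definition succ_mod :: "nat \<Rightarrow> nat \<Rightarrow> nat" where
  "succ_mod n i = (i + 1) mod n"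

definition pred_mod :: "nat \<Rightarrow> nat \<Rightarrow> nat" where
  "pred_mod n i = (i + n - 1) mod n"

text \<open>An orientation is a pair (h, w) of boolean functions on the grid:
  h v = True iff the horizontal edge at v points right (towards v+e1),
  w v = True iff the vertical edge at v points up (towards v+e2).
  At vertex v=(i,j): left edge = h(i-1,j), right edge = h(i,j),
  lower edge = w(i,j-1), upper edge = w(i,j).\<close>

definition in_degree :: "nat \<Rightarrow> (nat \<times> nat \<Rightarrow> bool) \<Rightarrow> (nat \<times> nat \<Rightarrow> bool) \<Rightarrow> nat \<times> nat \<Rightarrow> nat" where
  "in_degree n h w v = (case v of (i, j) \<Rightarrow>
      (if h (pred_mod n i, j) then 1 else 0) + (if \<not> h (i, j) then 1 else 0)
    + (if w (i, pred_mod n j) then 1 else 0) + (if \<not> w (i, j) then 1 else 0))"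

definition six_vertex_configs :: "nat \<Rightarrow> ((nat \<times> nat \<Rightarrow> bool) \<times> (nat \<times> nat \<Rightarrow> bool)) set" where
  "six_vertex_configs n =
     {(h, w). h \<in> grid n \<rightarrow>\<^sub>E (UNIV :: bool set) \<and> w \<in> grid n \<rightarrow>\<^sub>E (UNIV :: bool set)
        \<and> (\<forall>v \<in> grid n. in_degree n h w v = 2)}"

text \<open>Weight of a vertex given l (left edge points right), r (right edge points right),
  d (lower edge points up), u (upper edge points up).\<close>

definition vertex_weight :: "real \<Rightarrow> real \<Rightarrow> real \<Rightarrow> real \<Rightarrow> real \<Rightarrow> real \<Rightarrow> bool \<Rightarrow> bool \<Rightarrow> bool \<Rightarrow> bool \<Rightarrow> real" where
  "vertex_weight a1 a2 b1 b2 c1 c2 l r d u =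
     (if l \<and> r \<and> d \<and> u then a1                 \<comment> \<open>type 1: right, up\<close>
      else if \<not> l \<and> \<not> r \<and> \<not> d \<and> \<not> u then a2    \<comment> \<open>type 2: left, down\<close>
      else if l \<and> r \<and> \<not> d \<and> \<not> u then b1         \<comment> \<open>type 3: right, down\<close>
      else if \<not> l \<and> \<not> r \<and> d \<and> u then b2         \<comment> \<open>type 4: left, up\<close>
      else if l \<and> \<not> r \<and> \<not> d \<and> u then c1         \<comment> \<open>type 5: horizontal in, vertical out\<close>
      else if \<not> l \<and> r \<and> d \<and> \<not> u then c2         \<comment> \<open>type 6: horizontal out, vertical in\<close>
      else 0)"

definition Z6 :: "nat \<Rightarrow> real \<Rightarrow> real \<Rightarrow> real \<Rightarrow> real \<Rightarrow> real \<Rightarrow> real \<Rightarrow> real" where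
  "Z6 n a1 a2 b1 b2 c1 c2 =
     (\<Sum>(h, w) \<in> six_vertex_configs n. \<Prod>v \<in> grid n. case v of (i, j) \<Rightarrow>
        vertex_weight a1 a2 b1 b2 c1 c2
          (h (pred_mod n i, j)) (h (i, j)) (w (i, pred_mod n j)) (w (i, j)))"

text \<open>Mid-edges: (False, i, j) is the black mid-edge v + e1/2, (True, i, j) the white
  mid-edge v + e2/2, where v = (i,j).\<close>

type_synonym midedge = "bool \<times> nat \<times> nat"

definition midedges :: "nat \<Rightarrow> midedge set" where
  "midedges n = UNIV \<times> grid n"

definition plus_e1 :: "nat \<Rightarrow> midedge \<Rightarrow> midedge" where
  "plus_e1 n x = (case x of (c, i, j) \<Rightarrow> (c, succ_mod n i, j))"

definition plus_e2 :: "nat \<Rightarrow> midedge \<Rightarrow> midedge" where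
  "plus_e2 n x = (case x of (c, i, j) \<Rightarrow> (c, i, succ_mod n j))"

text \<open>black v+e1/2 + e3 = white (v+e1)+e2/2; white v+e2/2 + e3 = black (v+e2)+e1/2.\<close>

definition plus_e3 :: "nat \<Rightarrow> midedge \<Rightarrow> midedge" where
  "plus_e3 n x = (case x of (c, i, j) \<Rightarrow>
      (if c then (False, i, succ_mod n j) else (True, succ_mod n i, j)))"

definition GS :: "nat \<Rightarrow> (midedge \<Rightarrow> midedge) set" where
  "GS n = {\<rho>. \<rho> permutes midedges n \<and>
      (\<forall>x \<in> midedges n.
         (\<not> fst x \<longrightarrow> \<rho> x \<in> {x, plus_e3 n x, plus_e1 n x}) \<and>
         (fst x \<longrightarrow> \<rho> x \<in> {x, plus_e3 n x, plus_e2 n x}))}"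

definition S_count :: "nat \<Rightarrow> (midedge \<Rightarrow> midedge) \<Rightarrow> nat" where
  "S_count n \<rho> = card {v \<in> grid n. case v of (i, j) \<Rightarrow>
       \<rho> (False, pred_mod n i, j) = (False, i, j) \<and> \<rho> (True, i, pred_mod n j) = (True, i, j)}"

definition A_count :: "nat \<Rightarrow> (midedge \<Rightarrow> midedge) \<Rightarrow> nat" where
  "A_count n \<rho> = card {x \<in> midedges n. \<rho> x = plus_e1 n x}"

definition B_count :: "nat \<Rightarrow> (midedge \<Rightarrow> midedge) \<Rightarrow> nat" where
  "B_count n \<rho> = card {x \<in> midedges n. \<rho> x = plus_e2 n x}"

definition C_count :: "nat \<Rightarrow> (midedge \<Rightarrow> midedge) \<Rightarrow> nat" where
  "C_count n \<rho> = card {x \<in> midedges n. \<rho> x = plus_e3 n x}"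

definition Z_GS :: "nat \<Rightarrow> real \<Rightarrow> real \<Rightarrow> real \<Rightarrow> real" where
  "Z_GS n \<alpha> \<beta> \<gamma> = (\<Sum>\<rho> \<in> GS n.
      (-1) ^ S_count n \<rho> * \<alpha> ^ A_count n \<rho> * \<beta> ^ B_count n \<rho> * \<gamma> ^ C_count n \<rho>)"

end

theory Submission
  imports Defs
begin

(* A generalised snake configuration moves every mid-edge at most one step, onto one of the two
   mid-edges of the vertex ahead of it. Reading "the mid-edge is fixed" as "its edge points right
   (resp. up)" turns the fixed points into an arbitrary orientation of the torus, and the
   configuration is then recorded by saying, at each vertex v, where the two mid-edges entering v
   are sent. Given the orientation, being a permutation is a condition at each vertex separately,
   and the weight (-1)^S alpha^A beta^B gamma^C is a product over vertices. Hence Z^GS is a sum over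
   orientations of products of local sums, and the local sum is the six-vertex weight with a1 = 1,
   a2 = gamma^2 - alpha beta, b1 = beta, b2 = alpha, c1 = c2 = gamma, which vanishes where the ice
   rule fails. Positivity: these weights are nonnegative and the orientation with all edges
   pointing right or up has weight 1. *)

lemma succ_mod_lt [simp]: "0 < n \<Longrightarrow> succ_mod n i < n"
  by (simp add: succ_mod_def)

lemma pred_mod_lt [simp]: "0 < n \<Longrightarrow> pred_mod n i < n"
  by (simp add: pred_mod_def)

lemma pred_mod_succ_mod [simp]: "i < n \<Longrightarrow> pred_mod n (succ_mod n i) = i"
  unfolding succ_mod_def pred_mod_def by (cases "i + 1 = n") (auto simp: mod_if)

lemma succ_mod_pred_mod [simp]: "i < n \<Longrightarrow> succ_mod n (pred_mod n i) = i"
  unfolding succ_mod_def pred_mod_def by (cases "i = 0") (auto simp: mod_if)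

lemma succ_mod_neq: "2 \<le> n \<Longrightarrow> i < n \<Longrightarrow> succ_mod n i \<noteq> i"
  unfolding succ_mod_def by (auto simp: mod_if)

lemma pred_mod_neq: "2 \<le> n \<Longrightarrow> i < n \<Longrightarrow> pred_mod n i \<noteq> i"
  by (metis succ_mod_neq succ_mod_pred_mod)

lemma mem_grid_iff [simp]: "(i, j) \<in> grid n \<longleftrightarrow> i < n \<and> j < n"
  by (simp add: grid_def)

lemma mem_midedges_iff [simp]: "(c, v) \<in> midedges n \<longleftrightarrow> v \<in> grid n"
  by (simp add: midedges_def)

lemma finite_grid [simp]: "finite (grid n)"
  by (simp add: grid_def)

lemma finite_midedges [simp]: "finite (midedges n)"
  by (simp add: midedges_def)

definition left_mid :: "nat \<Rightarrow> nat \<times> nat \<Rightarrow> midedge" where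
  "left_mid n v = (False, pred_mod n (fst v), snd v)"

definition lower_mid :: "nat \<Rightarrow> nat \<times> nat \<Rightarrow> midedge" where
  "lower_mid n v = (True, fst v, pred_mod n (snd v))"

definition next_vertex :: "nat \<Rightarrow> midedge \<Rightarrow> nat \<times> nat" where
  "next_vertex n x = (case x of (c, i, j) \<Rightarrow> if c then (i, succ_mod n j) else (succ_mod n i, j))"

lemma fst_left_mid [simp]: "fst (left_mid n v) = False"
  and fst_lower_mid [simp]: "fst (lower_mid n v) = True"
  by (simp_all add: left_mid_def lower_mid_def)

lemma left_mid_neq_lower_mid [simp]:
  "left_mid n v \<noteq> lower_mid n v'" "lower_mid n v' \<noteq> left_mid n v"
  by (simp_all add: left_mid_def lower_mid_def)

lemma left_mid_in_midedges [simp]: "v \<in> grid n \<Longrightarrow> left_mid n v \<in> midedges n"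
  and lower_mid_in_midedges [simp]: "v \<in> grid n \<Longrightarrow> lower_mid n v \<in> midedges n"
  by (cases v; auto simp: left_mid_def lower_mid_def intro!: pred_mod_lt)+

lemma next_vertex_in_grid [simp]: "x \<in> midedges n \<Longrightarrow> next_vertex n x \<in> grid n"
  by (auto simp: next_vertex_def midedges_def grid_def intro!: succ_mod_lt)

lemma next_vertex_left_mid [simp]: "v \<in> grid n \<Longrightarrow> next_vertex n (left_mid n v) = v"
  and next_vertex_lower_mid [simp]: "v \<in> grid n \<Longrightarrow> next_vertex n (lower_mid n v) = v"
  by (auto simp: next_vertex_def left_mid_def lower_mid_def grid_def)

lemma left_mid_next_vertex: "x \<in> midedges n \<Longrightarrow> \<not> fst x \<Longrightarrow> left_mid n (next_vertex n x) = x"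
  and lower_mid_next_vertex: "x \<in> midedges n \<Longrightarrow> fst x \<Longrightarrow> lower_mid n (next_vertex n x) = x"
  by (auto simp: next_vertex_def left_mid_def lower_mid_def midedges_def grid_def)

lemma inj_on_left_mid: "inj_on (left_mid n) (grid n)"
  and inj_on_lower_mid: "inj_on (lower_mid n) (grid n)"
  by (auto intro!: inj_on_inverseI[where g = "next_vertex n"])

lemma midedges_eq_left_mid_lower_mid: "midedges n = left_mid n ` grid n \<union> lower_mid n ` grid n"
proof
  show "midedges n \<subseteq> left_mid n ` grid n \<union> lower_mid n ` grid n"
  proof
    fix x assume x: "x \<in> midedges n"
    then show "x \<in> left_mid n ` grid n \<union> lower_mid n ` grid n"
      using left_mid_next_vertex[OF x, THEN sym] lower_mid_next_vertex[OF x, THEN sym]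
      by (cases "fst x") auto
  qed
qed auto

lemma card_midedges_filter:
  "card {x \<in> midedges n. P x} = card {v \<in> grid n. P (left_mid n v)} + card {v \<in> grid n. P (lower_mid n v)}"
proof -
  have "{x \<in> midedges n. P x} =
      left_mid n ` {v \<in> grid n. P (left_mid n v)} \<union> lower_mid n ` {v \<in> grid n. P (lower_mid n v)}"
    by (subst midedges_eq_left_mid_lower_mid) blast
  moreover have "left_mid n ` {v \<in> grid n. P (left_mid n v)} \<inter> lower_mid n ` {v \<in> grid n. P (lower_mid n v)} = {}"
    by auto
  ultimately show ?thesis
    using inj_on_subset[OF inj_on_left_mid] inj_on_subset[OF inj_on_lower_mid]
    by (simp add: card_Un_disjoint card_image)
qed

lemma plus_e_left_mid [simp]:
  "v \<in> grid n \<Longrightarrow> plus_e1 n (left_mid n v) = (False, v)"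
  "v \<in> grid n \<Longrightarrow> plus_e3 n (left_mid n v) = (True, v)"
  by (cases v; simp add: plus_e1_def plus_e3_def left_mid_def)+

lemma plus_e_lower_mid [simp]:
  "v \<in> grid n \<Longrightarrow> plus_e2 n (lower_mid n v) = (True, v)"
  "v \<in> grid n \<Longrightarrow> plus_e3 n (lower_mid n v) = (False, v)"
  by (cases v; simp add: plus_e2_def plus_e3_def lower_mid_def)+

section \<open>The six-vertex partition function as a sum over all orientations\<close>

type_synonym orientation = "(nat \<times> nat \<Rightarrow> bool) \<times> (nat \<times> nat \<Rightarrow> bool)"

definition orientations :: "nat \<Rightarrow> orientation set" where
  "orientations n = (grid n \<rightarrow>\<^sub>E UNIV) \<times> (grid n \<rightarrow>\<^sub>E UNIV)"

text \<open>The flag of the black mid-edge at v is the horizontal arrow at v (True = right), that of the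
  white one the vertical arrow (True = up).\<close>

definition orientation_flag :: "orientation \<Rightarrow> midedge \<Rightarrow> bool" where
  "orientation_flag p x = (if fst x then snd p else fst p) (snd x)"

definition orientation_weight :: "nat \<Rightarrow> (bool \<Rightarrow> bool \<Rightarrow> bool \<Rightarrow> bool \<Rightarrow> real) \<Rightarrow> orientation \<Rightarrow> real" where
  "orientation_weight n W p = (\<Prod>v\<in>grid n. W (orientation_flag p (left_mid n v)) (orientation_flag p (False, v))
     (orientation_flag p (lower_mid n v)) (orientation_flag p (True, v)))"

lemma finite_orientations [simp]: "finite (orientations n)"
  by (simp add: orientations_def finite_PiE)

lemma vertex_weight_eq_0_if_in_degree:
  "in_degree n h w (i, j) \<noteq> 2 \<Longrightarrow>
    vertex_weight a1 a2 b1 b2 c1 c2 (h (pred_mod n i, j)) (h (i, j)) (w (i, pred_mod n j)) (w (i, j)) = 0"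
  unfolding in_degree_def vertex_weight_def by (auto split: if_splits)

lemma Z6_eq_sum_orientations:
  "Z6 n a1 a2 b1 b2 c1 c2 = (\<Sum>p\<in>orientations n. orientation_weight n (vertex_weight a1 a2 b1 b2 c1 c2) p)"
proof -
  let ?W = "orientation_weight n (vertex_weight a1 a2 b1 b2 c1 c2)"
  have "Z6 n a1 a2 b1 b2 c1 c2 = sum ?W (six_vertex_configs n)"
    unfolding Z6_def orientation_weight_def
    by (intro sum.cong refl prod.cong) (auto simp: orientation_flag_def left_mid_def lower_mid_def split_beta)
  also have "\<dots> = sum ?W (orientations n)"
  proof (rule sum.mono_neutral_left)
    show "six_vertex_configs n \<subseteq> orientations n"
      by (auto simp: six_vertex_configs_def orientations_def)
    show "\<forall>p\<in>orientations n - six_vertex_configs n. ?W p = 0"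
    proof
      fix p assume p: "p \<in> orientations n - six_vertex_configs n"
      obtain h w where hw: "p = (h, w)"
        by (cases p)
      with p obtain v where v: "v \<in> grid n" "in_degree n h w v \<noteq> 2"
        by (auto simp: six_vertex_configs_def orientations_def)
      then show "?W p = 0"
        using vertex_weight_eq_0_if_in_degree[of n h w "fst v" "snd v"] hw
        by (auto simp: orientation_weight_def orientation_flag_def left_mid_def lower_mid_def
            intro!: prod_zero bexI[OF _ v(1)])
    qed
  qed simp
  finally show ?thesis .
qed

lemma Z6_pos:
  assumes "0 < a1" "0 \<le> a2" "0 \<le> b1" "0 \<le> b2" "0 \<le> c1" "0 \<le> c2"
  shows "0 < Z6 n a1 a2 b1 b2 c1 c2"
proof -
  let ?W = "orientation_weight n (vertex_weight a1 a2 b1 b2 c1 c2)"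
  define right_up where "right_up = (restrict (\<lambda>_. True) (grid n), restrict (\<lambda>_. True) (grid n))"
  have "right_up \<in> orientations n"
    by (simp add: right_up_def orientations_def)
  moreover have "orientation_flag right_up x" if "x \<in> midedges n" for x
    using that by (auto simp: orientation_flag_def right_up_def midedges_def)
  then have "?W right_up = a1 ^ card (grid n)"
    by (simp add: orientation_weight_def vertex_weight_def)
  moreover have "0 \<le> ?W p" for p
    using assms by (auto simp: orientation_weight_def vertex_weight_def intro!: prod_nonneg)
  ultimately have "0 < sum ?W (orientations n)"
    using assms(1) by (intro sum_pos2[of _ right_up]) auto
  then show ?thesis
    by (simp add: Z6_eq_sum_orientations)
qed

section \<open>Local states at a vertex\<close>

text \<open>A local state (a, b) at v says where a snake configuration sends the black mid-edge left of v
  (a) and the white mid-edge below v (b): 0 = fixed, 1 = to the black mid-edge at v, 2 = to the white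
  one. The arguments l, r, d, u tell whether the left, right, lower and upper mid-edges at v are fixed.\<close>

definition local_states :: "bool \<Rightarrow> bool \<Rightarrow> bool \<Rightarrow> bool \<Rightarrow> (nat \<times> nat) set" where
  "local_states l r d u = {(a, b). a \<le> 2 \<and> b \<le> 2 \<and> (a = b \<longrightarrow> a = 0) \<and> (a = 0 \<longleftrightarrow> l) \<and> (b = 0 \<longleftrightarrow> d)
     \<and> ((a = 1 \<or> b = 1) \<longleftrightarrow> \<not> r) \<and> ((a = 2 \<or> b = 2) \<longleftrightarrow> \<not> u)}"

definition local_weight :: "real \<Rightarrow> real \<Rightarrow> real \<Rightarrow> nat \<Rightarrow> nat \<Rightarrow> real" where
  "local_weight \<alpha> \<beta> \<gamma> a b = (if a = 1 \<and> b = 2 then -1 else 1) * (if a = 1 then \<alpha> else 1)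
     * (if b = 2 then \<beta> else 1) * (if a = 2 then \<gamma> else 1) * (if b = 1 then \<gamma> else 1)"

lemma local_states_enum:
  "local_states l r d u = set (filter (\<lambda>s. s \<in> local_states l r d u)
     [(0, 0), (0, 1), (0, 2), (1, 0), (1, 1), (1, 2), (2, 0), (2, 1), (2, 2)])"
proof -
  have "a \<le> 2 \<Longrightarrow> a = 0 \<or> a = 1 \<or> a = 2" for a :: nat
    by auto
  then show ?thesis
    by (auto simp: local_states_def)
qed

lemma finite_local_states [simp]: "finite (local_states l r d u)"
  by (subst local_states_enum) simp

text \<open>Only the all-reversed vertex has two local states, (1, 2) and (2, 1), of weights
  -\<alpha>\<beta> and \<gamma>^2.\<close>

lemma sum_local_weight:
  "(\<Sum>(a, b)\<in>local_states l r d u. local_weight \<alpha> \<beta> \<gamma> a b) =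
     vertex_weight 1 (\<gamma>\<^sup>2 - \<alpha> * \<beta>) \<beta> \<alpha> \<gamma> \<gamma> l r d u"
  by (subst local_states_enum, cases l; cases r; cases d; cases u)
    (simp_all add: local_states_def local_weight_def vertex_weight_def power2_eq_square)

definition state_code :: "nat \<times> nat \<Rightarrow> midedge \<Rightarrow> nat" where
  "state_code v y = (if y = (False, v) then 1 else if y = (True, v) then 2 else 0)"

definition state_move :: "nat \<times> nat \<Rightarrow> nat \<Rightarrow> midedge \<Rightarrow> midedge" where
  "state_move v k x = (if k = 1 then (False, v) else if k = 2 then (True, v) else x)"

lemma state_move_state_code: "y \<in> {x, (False, v), (True, v)} \<Longrightarrow> state_move v (state_code v y) x = y"
  by (auto simp: state_move_def state_code_def)

lemma state_code_state_move: "k \<le> 2 \<Longrightarrow> x \<notin> {(False, v), (True, v)} \<Longrightarrow> state_code v (state_move v k x) = k"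
  by (auto simp: state_move_def state_code_def)

lemma state_codes_in_local_states:
  assumes "inj \<rho>"
    and "\<rho> L \<in> {L, (False, v), (True, v)}" "\<rho> D \<in> {D, (False, v), (True, v)}"
    and "distinct [L, D, (False, v), (True, v)]"
    and "\<rho> (False, v) \<noteq> (False, v) \<Longrightarrow> (False, v) \<in> {\<rho> L, \<rho> D}"
    and "\<rho> (True, v) \<noteq> (True, v) \<Longrightarrow> (True, v) \<in> {\<rho> L, \<rho> D}"
  shows "(state_code v (\<rho> L), state_code v (\<rho> D)) \<in>
    local_states (\<rho> L = L) (\<rho> (False, v) = (False, v)) (\<rho> D = D) (\<rho> (True, v) = (True, v))"
proof -
  have "\<rho> L \<noteq> \<rho> D" "\<rho> L \<noteq> \<rho> (False, v)" "\<rho> L \<noteq> \<rho> (True, v)"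
    "\<rho> D \<noteq> \<rho> (False, v)" "\<rho> D \<noteq> \<rho> (True, v)"
    using assms(4) by (auto simp: inj_eq[OF assms(1)])
  then show ?thesis
    using assms(2-6) by (auto simp: local_states_def state_code_def; blast)
qed

lemma prod_if_one_eq_power:
  fixes c :: "'a :: comm_monoid_mult"
  shows "finite A \<Longrightarrow> (\<Prod>x\<in>A. if P x then c else 1) = c ^ card {x \<in> A. P x}"
  by (simp add: prod.inter_filter[symmetric])

lemma prod_local_weight:
  "finite A \<Longrightarrow> (\<Prod>v\<in>A. local_weight \<alpha> \<beta> \<gamma> (a v) (b v)) =
    (-1) ^ card {v \<in> A. a v = 1 \<and> b v = 2} * \<alpha> ^ card {v \<in> A. a v = 1} * \<beta> ^ card {v \<in> A. b v = 2}
      * \<gamma> ^ (card {v \<in> A. a v = 2} + card {v \<in> A. b v = 1})"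
  by (simp add: local_weight_def prod.distrib prod_if_one_eq_power power_add mult.assoc)

section \<open>Snake configurations as decorated orientations\<close>

lemma mem_GS_iff:
  "\<rho> \<in> GS n \<longleftrightarrow> \<rho> permutes midedges n \<and>
     (\<forall>x\<in>midedges n. \<rho> x \<in> {x, (False, next_vertex n x), (True, next_vertex n x)})"
proof -
  have "(\<not> fst x \<longrightarrow> \<rho> x \<in> {x, plus_e3 n x, plus_e1 n x}) \<and> (fst x \<longrightarrow> \<rho> x \<in> {x, plus_e3 n x, plus_e2 n x})
      \<longleftrightarrow> \<rho> x \<in> {x, (False, next_vertex n x), (True, next_vertex n x)}" for x
    by (cases x) (auto simp: next_vertex_def plus_e1_def plus_e2_def plus_e3_def)
  then show ?thesis
    by (simp add: GS_def)
qed

lemma GS_moves: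
  "\<rho> \<in> GS n \<Longrightarrow> x \<in> midedges n \<Longrightarrow> \<rho> x \<in> {x, (False, next_vertex n x), (True, next_vertex n x)}"
  by (simp add: mem_GS_iff)

lemma GS_preimage:
  assumes "\<rho> \<in> GS n" "\<rho> z \<in> {(False, v), (True, v)}" "\<rho> z \<noteq> z"
  shows "z = left_mid n v \<or> z = lower_mid n v"
proof -
  have z: "z \<in> midedges n"
    using assms(1,3) by (auto simp: mem_GS_iff dest: permutes_not_in)
  then have "next_vertex n z = v"
    using GS_moves[OF assms(1) z] assms(2,3) by auto
  then show ?thesis
    using left_mid_next_vertex[OF z] lower_mid_next_vertex[OF z] by (cases "fst z") auto
qed

definition snake_orientation :: "nat \<Rightarrow> (midedge \<Rightarrow> midedge) \<Rightarrow> orientation" where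
  "snake_orientation n \<rho> = (restrict (\<lambda>v. \<rho> (False, v) = (False, v)) (grid n),
     restrict (\<lambda>v. \<rho> (True, v) = (True, v)) (grid n))"

definition snake_states :: "nat \<Rightarrow> (midedge \<Rightarrow> midedge) \<Rightarrow> nat \<times> nat \<Rightarrow> nat \<times> nat" where
  "snake_states n \<rho> =
     restrict (\<lambda>v. (state_code v (\<rho> (left_mid n v)), state_code v (\<rho> (lower_mid n v)))) (grid n)"

definition snake_of_states :: "nat \<Rightarrow> (nat \<times> nat \<Rightarrow> nat \<times> nat) \<Rightarrow> midedge \<Rightarrow> midedge" where
  "snake_of_states n c x = (if x \<in> midedges n then
     state_move (next_vertex n x) ((if fst x then snd else fst) (c (next_vertex n x))) x else x)"

definition vertex_states :: "nat \<Rightarrow> orientation \<Rightarrow> nat \<times> nat \<Rightarrow> (nat \<times> nat) set" where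
  "vertex_states n p v = local_states (orientation_flag p (left_mid n v)) (orientation_flag p (False, v))
     (orientation_flag p (lower_mid n v)) (orientation_flag p (True, v))"

definition decorated_orientations :: "nat \<Rightarrow> (orientation \<times> (nat \<times> nat \<Rightarrow> nat \<times> nat)) set" where
  "decorated_orientations n = (SIGMA p : orientations n. PiE (grid n) (vertex_states n p))"

lemma finite_vertex_states [simp]: "finite (vertex_states n p v)"
  by (simp add: vertex_states_def)

lemma snake_states_apply:
  "v \<in> grid n \<Longrightarrow> snake_states n \<rho> v = (state_code v (\<rho> (left_mid n v)), state_code v (\<rho> (lower_mid n v)))"
  by (simp add: snake_states_def)

lemma orientation_flag_snake_orientation:
  "x \<in> midedges n \<Longrightarrow> orientation_flag (snake_orientation n \<rho>) x = (\<rho> x = x)"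
  by (auto simp: orientation_flag_def snake_orientation_def midedges_def)

lemma snake_states_component:
  assumes "x \<in> midedges n"
  shows "(if fst x then snd else fst) (snake_states n \<rho> (next_vertex n x)) =
    state_code (next_vertex n x) (\<rho> x)"
  using left_mid_next_vertex[OF assms] lower_mid_next_vertex[OF assms] assms
  by (auto simp: snake_states_apply)

lemma snake_of_states_snake_states:
  assumes "\<rho> \<in> GS n"
  shows "snake_of_states n (snake_states n \<rho>) = \<rho>"
proof
  fix x
  show "snake_of_states n (snake_states n \<rho>) x = \<rho> x"
  proof (cases "x \<in> midedges n")
    case True
    then show ?thesis
      using GS_moves[OF assms True]
      by (simp add: snake_of_states_def snake_states_component state_move_state_code)
  next
    case False
    have "\<rho> permutes midedges n"
      using assms by (simp add: mem_GS_iff)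
    with False show ?thesis
      by (simp add: snake_of_states_def permutes_not_in)
  qed
qed

lemma decorated_orientation_component:
  assumes "(p, c) \<in> decorated_orientations n" "x \<in> midedges n"
  defines "k \<equiv> (if fst x then snd else fst) (c (next_vertex n x))"
  shows "k \<le> 2" and "k = 0 \<longleftrightarrow> orientation_flag p x"
proof -
  have "c (next_vertex n x) \<in> vertex_states n p (next_vertex n x)"
    using assms(1,2) by (auto simp: decorated_orientations_def)
  then have "k \<le> 2 \<and> (k = 0 \<longleftrightarrow> orientation_flag p x)"
    using left_mid_next_vertex[OF assms(2)] lower_mid_next_vertex[OF assms(2)]
    by (cases "fst x") (auto simp: k_def vertex_states_def local_states_def)
  then show "k \<le> 2" and "k = 0 \<longleftrightarrow> orientation_flag p x"
    by simp_all
qed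

lemma snake_of_states_left_mid:
  "v \<in> grid n \<Longrightarrow> snake_of_states n c (left_mid n v) = state_move v (fst (c v)) (left_mid n v)"
  and snake_of_states_lower_mid:
  "v \<in> grid n \<Longrightarrow> snake_of_states n c (lower_mid n v) = state_move v (snd (c v)) (lower_mid n v)"
  by (simp_all add: snake_of_states_def)

lemma mem_image_snake_of_states:
  assumes "(p, c) \<in> decorated_orientations n" "v \<in> grid n" "\<not> orientation_flag p (b, v)"
  shows "(b, v) \<in> snake_of_states n c ` {left_mid n v, lower_mid n v}"
proof -
  have "c v \<in> vertex_states n p v"
    using assms(1,2) by (auto simp: decorated_orientations_def)
  then show ?thesis
    using assms(2,3)
    by (cases b) (auto simp: vertex_states_def local_states_def snake_of_states_left_mid
        snake_of_states_lower_mid state_move_def)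
qed

lemma S_count_snake_states:
  "S_count n \<rho> = card {v \<in> grid n. fst (snake_states n \<rho> v) = 1 \<and> snd (snake_states n \<rho> v) = 2}"
  unfolding S_count_def
  by (intro arg_cong[where f = card])
    (auto simp: snake_states_apply state_code_def left_mid_def lower_mid_def split: if_splits)

lemma C_count_snake_states:
  "C_count n \<rho> = card {v \<in> grid n. fst (snake_states n \<rho> v) = 2} + card {v \<in> grid n. snd (snake_states n \<rho> v) = 1}"
proof -
  have "{v \<in> grid n. \<rho> (left_mid n v) = plus_e3 n (left_mid n v)} = {v \<in> grid n. fst (snake_states n \<rho> v) = 2}"
    "{v \<in> grid n. \<rho> (lower_mid n v) = plus_e3 n (lower_mid n v)} = {v \<in> grid n. snd (snake_states n \<rho> v) = 1}"
    by (auto simp: snake_states_apply state_code_def split: if_splits)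
  then show ?thesis
    by (simp add: C_count_def card_midedges_filter)
qed

context
  fixes n :: nat
  assumes two_le_n: "2 \<le> n"
begin

lemma midedge_neq_at_next_vertex [simp]:
  "x \<in> midedges n \<Longrightarrow> x \<noteq> (False, next_vertex n x)"
  "x \<in> midedges n \<Longrightarrow> x \<noteq> (True, next_vertex n x)"
  by (auto simp: next_vertex_def midedges_def grid_def) (metis succ_mod_neq[OF two_le_n])+

lemma left_mid_neq [simp]:
  "v \<in> grid n \<Longrightarrow> left_mid n v \<noteq> (False, v)"
  "v \<in> grid n \<Longrightarrow> left_mid n v \<noteq> (True, v)"
  by (auto simp: left_mid_def grid_def dest: pred_mod_neq[OF two_le_n])

lemma lower_mid_neq [simp]:
  "v \<in> grid n \<Longrightarrow> lower_mid n v \<noteq> (False, v)"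
  "v \<in> grid n \<Longrightarrow> lower_mid n v \<noteq> (True, v)"
  by (auto simp: lower_mid_def grid_def dest: pred_mod_neq[OF two_le_n])

lemma plus_e2_left_mid_notin: "v \<in> grid n \<Longrightarrow> plus_e2 n (left_mid n v) \<notin> {left_mid n v, (False, v), (True, v)}"
  and plus_e1_lower_mid_notin: "v \<in> grid n \<Longrightarrow> plus_e1 n (lower_mid n v) \<notin> {lower_mid n v, (False, v), (True, v)}"
  by (cases v; auto simp: plus_e1_def plus_e2_def left_mid_def lower_mid_def
      dest: succ_mod_neq[OF two_le_n] pred_mod_neq[OF two_le_n])+

lemma snake_states_local:
  assumes "\<rho> \<in> GS n" "v \<in> grid n"
  shows "(state_code v (\<rho> (left_mid n v)), state_code v (\<rho> (lower_mid n v))) \<in>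
    local_states (\<rho> (left_mid n v) = left_mid n v) (\<rho> (False, v) = (False, v))
      (\<rho> (lower_mid n v) = lower_mid n v) (\<rho> (True, v) = (True, v))"
proof (rule state_codes_in_local_states)
  have perm: "\<rho> permutes midedges n"
    using assms(1) by (simp add: GS_def)
  then show "inj \<rho>"
    by (rule permutes_inj)
  show "\<rho> (left_mid n v) \<in> {left_mid n v, (False, v), (True, v)}"
    using GS_moves[OF assms(1), of "left_mid n v"] assms(2) by simp
  show "\<rho> (lower_mid n v) \<in> {lower_mid n v, (False, v), (True, v)}"
    using GS_moves[OF assms(1), of "lower_mid n v"] assms(2) by simp
  show "distinct [left_mid n v, lower_mid n v, (False, v), (True, v)]"
    using assms(2) by (auto simp: left_mid_neq[THEN not_sym] lower_mid_neq[THEN not_sym])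
  have hit: "y \<in> {\<rho> (left_mid n v), \<rho> (lower_mid n v)}"
    if "y \<in> {(False, v), (True, v)}" "\<rho> y \<noteq> y" for y
  proof -
    obtain z where z: "\<rho> z = y"
      using permutes_surj[OF perm] by (metis surjD)
    with that have "\<rho> z \<noteq> z"
      by auto
    then show ?thesis
      using GS_preimage[OF assms(1), of z v] z that(1) by auto
  qed
  then show "\<rho> (False, v) \<noteq> (False, v) \<Longrightarrow> (False, v) \<in> {\<rho> (left_mid n v), \<rho> (lower_mid n v)}"
    and "\<rho> (True, v) \<noteq> (True, v) \<Longrightarrow> (True, v) \<in> {\<rho> (left_mid n v), \<rho> (lower_mid n v)}"
    by simp_all
qed

lemma snake_orientation_states_mem:
  assumes "\<rho> \<in> GS n"
  shows "(snake_orientation n \<rho>, snake_states n \<rho>) \<in> decorated_orientations n"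
proof -
  have "snake_states n \<rho> v \<in> vertex_states n (snake_orientation n \<rho>) v" if "v \<in> grid n" for v
    using snake_states_local[OF assms that] that
    by (simp add: snake_states_def vertex_states_def orientation_flag_snake_orientation)
  moreover have "snake_states n \<rho> \<in> extensional (grid n)"
    by (simp add: snake_states_def)
  ultimately show ?thesis
    by (simp add: decorated_orientations_def orientations_def snake_orientation_def PiE_iff)
qed

lemma snake_of_states_fixed_iff:
  assumes "(p, c) \<in> decorated_orientations n" "x \<in> midedges n"
  shows "snake_of_states n c x = x \<longleftrightarrow> orientation_flag p x"
  using decorated_orientation_component[OF assms] assms(2) midedge_neq_at_next_vertex[OF assms(2), THEN not_sym]
  by (cases "fst x") (auto simp: snake_of_states_def state_move_def)

lemma snake_states_snake_of_states:
  assumes "(p, c) \<in> decorated_orientations n"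
  shows "snake_states n (snake_of_states n c) = c"
proof -
  have "snake_states n (snake_of_states n c) = restrict c (grid n)"
  proof (unfold snake_states_def, rule restrict_ext)
    fix v assume v: "v \<in> grid n"
    have "fst (c v) \<le> 2" "snd (c v) \<le> 2"
      using decorated_orientation_component(1)[OF assms, of "left_mid n v"]
        decorated_orientation_component(1)[OF assms, of "lower_mid n v"] v by simp_all
    then show "(state_code v (snake_of_states n c (left_mid n v)),
        state_code v (snake_of_states n c (lower_mid n v))) = c v"
      using v by (simp add: snake_of_states_left_mid snake_of_states_lower_mid state_code_state_move)
  qed
  also have "\<dots> = c"
    using assms by (auto simp: decorated_orientations_def PiE_restrict)
  finally show ?thesis .
qed

lemma snake_orientation_snake_of_states:
  assumes "(p, c) \<in> decorated_orientations n"
  shows "snake_orientation n (snake_of_states n c) = p"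
proof -
  have flags: "restrict (\<lambda>v. snake_of_states n c (b, v) = (b, v)) (grid n) = (if b then snd else fst) p"
    for b
  proof -
    have "restrict (\<lambda>v. snake_of_states n c (b, v) = (b, v)) (grid n) =
        restrict ((if b then snd else fst) p) (grid n)"
      by (rule restrict_ext) (simp add: snake_of_states_fixed_iff[OF assms] orientation_flag_def)
    also have "\<dots> = (if b then snd else fst) p"
      using assms by (auto simp: decorated_orientations_def orientations_def PiE_restrict)
    finally show ?thesis .
  qed
  show ?thesis
    using flags[of False] flags[of True] by (simp add: snake_orientation_def)
qed

lemma snake_of_states_in_GS:
  assumes "(p, c) \<in> decorated_orientations n"
  shows "snake_of_states n c \<in> GS n"
proof -
  let ?f = "snake_of_states n c"
  have moves: "?f x \<in> {x, (False, next_vertex n x), (True, next_vertex n x)}" for x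
    by (simp add: snake_of_states_def state_move_def)
  have into: "?f ` midedges n \<subseteq> midedges n"
  proof (rule image_subsetI)
    fix x assume "x \<in> midedges n"
    then show "?f x \<in> midedges n"
      using moves[of x] by auto
  qed
  have onto: "midedges n \<subseteq> ?f ` midedges n"
  proof
    fix y assume y: "y \<in> midedges n"
    then obtain b v where bv: "y = (b, v)" "v \<in> grid n"
      by (auto simp: midedges_def)
    show "y \<in> ?f ` midedges n"
    proof (cases "orientation_flag p y")
      case True
      then show ?thesis
        using snake_of_states_fixed_iff[OF assms y] y by (simp add: rev_image_eqI)
    next
      case False
      have "{left_mid n v, lower_mid n v} \<subseteq> midedges n"
        using bv(2) by simp
      then show ?thesis
        using mem_image_snake_of_states[OF assms bv(2)] False bv(1) by blast
    qed
  qed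
  have "bij_betw ?f (midedges n) (midedges n)"
    using into onto finite_surj_inj[OF finite_midedges onto] by (auto simp: bij_betw_def)
  then have "?f permutes midedges n"
    by (rule bij_imp_permutes) (simp add: snake_of_states_def)
  then show ?thesis
    using moves by (simp add: mem_GS_iff)
qed

lemma A_count_snake_states:
  assumes "\<rho> \<in> GS n"
  shows "A_count n \<rho> = card {v \<in> grid n. fst (snake_states n \<rho> v) = 1}"
proof -
  have "{v \<in> grid n. \<rho> (lower_mid n v) = plus_e1 n (lower_mid n v)} = {}"
    using GS_moves[OF assms lower_mid_in_midedges] plus_e1_lower_mid_notin by fastforce
  moreover have "{v \<in> grid n. \<rho> (left_mid n v) = plus_e1 n (left_mid n v)} =
      {v \<in> grid n. fst (snake_states n \<rho> v) = 1}"
    by (auto simp: snake_states_apply state_code_def split: if_splits)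
  ultimately show ?thesis
    by (simp add: A_count_def card_midedges_filter)
qed

lemma B_count_snake_states:
  assumes "\<rho> \<in> GS n"
  shows "B_count n \<rho> = card {v \<in> grid n. snd (snake_states n \<rho> v) = 2}"
proof -
  have "{v \<in> grid n. \<rho> (left_mid n v) = plus_e2 n (left_mid n v)} = {}"
    using GS_moves[OF assms left_mid_in_midedges] plus_e2_left_mid_notin by fastforce
  moreover have "{v \<in> grid n. \<rho> (lower_mid n v) = plus_e2 n (lower_mid n v)} =
      {v \<in> grid n. snd (snake_states n \<rho> v) = 2}"
    by (auto simp: snake_states_apply state_code_def split: if_splits)
  ultimately show ?thesis
    by (simp add: B_count_def card_midedges_filter)
qed

lemma snake_weight_eq_prod_local_weight:
  assumes "\<rho> \<in> GS n"
  shows "(-1) ^ S_count n \<rho> * \<alpha> ^ A_count n \<rho> * \<beta> ^ B_count n \<rho> * \<gamma> ^ C_count n \<rho> =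
    (\<Prod>v\<in>grid n. case_prod (local_weight \<alpha> \<beta> \<gamma>) (snake_states n \<rho> v))"
  using prod_local_weight[OF finite_grid, of \<alpha> \<beta> \<gamma> "\<lambda>v. fst (snake_states n \<rho> v)" "\<lambda>v. snd (snake_states n \<rho> v)"]
  by (simp add: split_beta S_count_snake_states A_count_snake_states[OF assms]
      B_count_snake_states[OF assms] C_count_snake_states)

lemma Z_GS_eq_sum_orientations:
  "Z_GS n \<alpha> \<beta> \<gamma> = (\<Sum>p\<in>orientations n. orientation_weight n (vertex_weight 1 (\<gamma>\<^sup>2 - \<alpha> * \<beta>) \<beta> \<alpha> \<gamma> \<gamma>) p)"
proof -
  let ?w = "\<lambda>c. \<Prod>v\<in>grid n. case_prod (local_weight \<alpha> \<beta> \<gamma>) (c v)"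
  have "Z_GS n \<alpha> \<beta> \<gamma> = (\<Sum>\<rho>\<in>GS n. ?w (snake_states n \<rho>))"
    unfolding Z_GS_def by (rule sum.cong) (simp_all add: snake_weight_eq_prod_local_weight)
  also have "\<dots> = (\<Sum>(p, c)\<in>decorated_orientations n. ?w c)"
    by (rule sum.reindex_bij_witness[where i = "\<lambda>(p, c). snake_of_states n c"
          and j = "\<lambda>\<rho>. (snake_orientation n \<rho>, snake_states n \<rho>)"])
      (auto simp: snake_orientation_states_mem snake_of_states_snake_states snake_of_states_in_GS
        snake_orientation_snake_of_states snake_states_snake_of_states)
  also have "\<dots> = (\<Sum>p\<in>orientations n. \<Sum>c\<in>PiE (grid n) (vertex_states n p). ?w c)"
    unfolding decorated_orientations_def
    by (rule sum.Sigma[symmetric]) (auto simp: finite_PiE vertex_states_def orientations_def)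
  also have "\<dots> = (\<Sum>p\<in>orientations n. \<Prod>v\<in>grid n. \<Sum>s\<in>vertex_states n p v. case_prod (local_weight \<alpha> \<beta> \<gamma>) s)"
    by (rule sum.cong[OF refl]) (simp add: prod_sum_PiE)
  also have "\<dots> = (\<Sum>p\<in>orientations n. orientation_weight n (vertex_weight 1 (\<gamma>\<^sup>2 - \<alpha> * \<beta>) \<beta> \<alpha> \<gamma> \<gamma>) p)"
    by (simp add: vertex_states_def orientation_weight_def sum_local_weight)
  finally show ?thesis .
qed

end

theorem corollary2p4:
  fixes \<alpha> \<beta> \<gamma> :: real and n :: nat
  assumes "\<alpha> > 0" and "\<beta> > 0" and "\<gamma> > 0" and "\<gamma>^2 - \<alpha> * \<beta> > 0" and "n \<ge> 2"
  shows "Z_GS n \<alpha> \<beta> \<gamma> = Z6 n 1 (\<gamma>^2 - \<alpha> * \<beta>) \<beta> \<alpha> \<gamma> \<gamma> \<and> Z_GS n \<alpha> \<beta> \<gamma> > 0"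
proof -
  have "Z_GS n \<alpha> \<beta> \<gamma> = Z6 n 1 (\<gamma>^2 - \<alpha> * \<beta>) \<beta> \<alpha> \<gamma> \<gamma>"
    using Z_GS_eq_sum_orientations[OF assms(5)] by (simp add: Z6_eq_sum_orientations)
  moreover have "Z6 n 1 (\<gamma>^2 - \<alpha> * \<beta>) \<beta> \<alpha> \<gamma> \<gamma> > 0"
    using assms(1-4) by (intro Z6_pos) auto
  ultimately show ?thesis
    by simp
qed

end
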